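(* Let $d,n\ge 2$, let $f$ be an active update function, let $\mathcal D$ be an interaction distribution on $\Omega$ with full support, and let $\mathcal U^{(0)}$ be any configuration of $n$ opinions in $\mathbb S^{d-1}$. Then $\mathcal U^{(t)}$ polarizes almost surely.
   Context: Model: fix integers $d,n\ge 2$. An opinion is a unit vector in $\mathbb R^d$; a configuration is an $n$-tuple $\mathcal U=(\vec u_1,\dots,\vec u_n)$ of opinions, and $A_{ij}:=\langle \vec u_i,\vec u_j\rangle$. An update function is a function $f:[-1,1]\to\mathbb R$. Let $\Omega=\{(i,j)\in[n]\times[n]: i\ne j\}$, let $\mathcal D$ be a probability distribution on $\Omega$ (full support: every element has positive probability), and let $I^{(1)},I^{(2)},\dots$ be i.i.d. with law $\mathcal D$. Given $\mathcal U^{(0)}$, if the interaction at step $t$ is $(i,j)$ then $\vec u_k^{(t+1)}=\vec u_k^{(t)}$ for $k\ne i$ and $\vec u_i^{(t+1)}=\vec w/\|\vec w\|$ with $\vec w=\vec u_i^{(t)}+f(A_{ij}^{(t)})\,\vec u_j^{(t)}$. A configuration is polarized if for all $i,j$, $\vec u_i=\pm\vec u_j$; $\mathcal U^{(t)}$ polarizes if $\lim_{t\to\infty}\mathcal U^{(t)}$ exists and is polarized. $f$ is active if (1) there exists $A_0\in(-1,1)$ with $f(A)\le 0$ for $A<A_0$ and $f(A)\ge 0$ for $A>A_0$, and (2) there is $m>0$ with $\inf_{-1\le A\le 1}|f(A)|\ge m$. *)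

theory Defs
  imports "HOL-Probability.Probability"
begin

text \<open>Opinions are unit vectors of a Euclidean space 'a (dimension DIM('a) = d);
  a configuration is a map U :: nat => 'a of which only the entries 0..n-1 matter.\<close>

definition active :: "(real \<Rightarrow> real) \<Rightarrow> bool" where
  "active f \<longleftrightarrow>
     (\<exists>A0. -1 < A0 \<and> A0 < 1 \<and>
        (\<forall>A\<in>{-1..1}. A < A0 \<longrightarrow> f A \<le> 0) \<and>
        (\<forall>A\<in>{-1..1}. A > A0 \<longrightarrow> f A \<ge> 0)) \<and>
     (\<exists>m>0. \<forall>A\<in>{-1..1}. m \<le> \<bar>f A\<bar>)"

definition interactions :: "nat \<Rightarrow> (nat \<times> nat) set" where
  "interactions n = {(i, j). i < n \<and> j < n \<and> i \<noteq> j}"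

definition update :: "(real \<Rightarrow> real) \<Rightarrow> (nat \<Rightarrow> 'a::real_inner) \<Rightarrow> nat \<times> nat \<Rightarrow> (nat \<Rightarrow> 'a)" where
  "update f U ij =
     (let i = fst ij; j = snd ij; w = U i + f (inner (U i) (U j)) *\<^sub>R U j
      in U(i := (1 / norm w) *\<^sub>R w))"

primrec traj :: "(real \<Rightarrow> real) \<Rightarrow> (nat \<Rightarrow> 'a::real_inner) \<Rightarrow> (nat \<Rightarrow> nat \<times> nat) \<Rightarrow> nat \<Rightarrow> (nat \<Rightarrow> 'a)" where
  "traj f U0 I 0 = U0"
| "traj f U0 I (Suc t) = update f (traj f U0 I t) (I t)"

definition polarized :: "nat \<Rightarrow> (nat \<Rightarrow> 'a::real_normed_vector) \<Rightarrow> bool" where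
  "polarized n U \<longleftrightarrow> (\<forall>i<n. \<forall>j<n. U i = U j \<or> U i = - U j)"

definition polarizes :: "nat \<Rightarrow> (nat \<Rightarrow> nat \<Rightarrow> 'a::real_normed_vector) \<Rightarrow> bool" where
  "polarizes n X \<longleftrightarrow>
     (\<exists>L. (\<forall>i<n. (\<lambda>t. X t i) \<longlonglongrightarrow> L i) \<and> polarized n L)"

end

theory Submission
  imports Defs
begin

text \<open>Let \<open>c\<close> be the cosine of the angle between an opinion and the opinion it interacts with.
  One update adds exactly \<open>f c / \<surd>(1 - c\<^sup>2)\<close> to the cotangent \<open>c / \<surd>(1 - c\<^sup>2)\<close> of that angle;
  by activity this increment has modulus at least \<open>m\<close> and pushes the cotangent away from its
  value at the threshold \<open>A0\<close>. Hence \<open>K\<close> consecutive interactions of every agent with agent \<open>0\<close>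
  bring all opinions, up to sign, into a prescribed cap around the opinion of agent \<open>0\<close>. A cap
  narrow enough that all pairwise inner products exceed \<open>\<bar>A0\<bar>\<close> in modulus is never left again,
  because then every update of a signed opinion is a normalised nonnegative combination of two
  signed opinions of the cap. In an i.i.d. sequence of interactions with full support every finite
  word occurs almost surely, so caps of every width are eventually entered, which forces the
  opinions to converge to a polarized limit.\<close>

definition step :: "(real \<Rightarrow> real) \<Rightarrow> 'a::real_inner \<Rightarrow> 'a \<Rightarrow> 'a" where
  "step f y x = (let w = x + f (inner x y) *\<^sub>R y in (1 / norm w) *\<^sub>R w)"

lemma update_eq_step: "update f U (i, j) = U(i := step f (U j) (U i))"
  by (simp add: update_def step_def Let_def)

definition cot_angle :: "real \<Rightarrow> real" where
  "cot_angle c = c / sqrt (1 - c\<^sup>2)"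

lemma unit_inner_abs_le:
  fixes x y :: "'a::real_inner"
  assumes "norm x = 1" "norm y = 1" shows "\<bar>inner x y\<bar> \<le> 1"
  using Cauchy_Schwarz_ineq2[of x y] assms by simp

lemma unit_inner_abs_eq_1:
  fixes x y :: "'a::real_inner"
  assumes "norm x = 1" "norm y = 1" "\<bar>inner x y\<bar> = 1" shows "x = y \<or> x = - y"
  using norm_cauchy_schwarz_abs_eq[of x y] assms by auto

lemma norm_diff_unit_sq:
  fixes u v :: "'a::real_inner"
  assumes "norm u = 1" "norm v = 1" shows "(norm (u - v))\<^sup>2 = 2 - 2 * inner u v"
  using assms dot_norm_neg[of u v] by simp

lemma cot_angle_minus: "cot_angle (- c) = - cot_angle c"
  by (simp add: cot_angle_def)

lemma cot_angle_abs: "\<bar>c\<bar> \<le> 1 \<Longrightarrow> cot_angle \<bar>c\<bar> = \<bar>cot_angle c\<bar>"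
  by (simp add: cot_angle_def abs_div abs_square_le_1)

lemma cot_angle_less_nonneg:
  assumes "0 \<le> c" "c < d" "d < 1" shows "cot_angle c < cot_angle d"
proof -
  have "0 < 1 - d\<^sup>2" "1 - d\<^sup>2 < 1 - c\<^sup>2"
    using assms by (simp_all add: abs_square_less_1 power_strict_mono)
  then have s: "0 < sqrt (1 - d\<^sup>2)" "sqrt (1 - d\<^sup>2) < sqrt (1 - c\<^sup>2)" by auto
  have "c / sqrt (1 - c\<^sup>2) \<le> c / sqrt (1 - d\<^sup>2)"
    using s assms(1) by (intro divide_left_mono) auto
  also have "\<dots> < d / sqrt (1 - d\<^sup>2)" using s assms by (simp add: divide_strict_right_mono)
  finally show ?thesis by (simp add: cot_angle_def)
qed

lemma cot_angle_pos_iff: "\<bar>c\<bar> < 1 \<Longrightarrow> 0 < cot_angle c \<longleftrightarrow> 0 < c"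
  using abs_square_less_1[of c] by (auto simp: cot_angle_def zero_less_divide_iff)

lemma cot_angle_less:
  assumes "\<bar>c\<bar> < 1" "\<bar>d\<bar> < 1" "c < d" shows "cot_angle c < cot_angle d"
proof -
  consider "0 \<le> c" | "d \<le> 0" | "c < 0" "0 < d" by linarith
  then show ?thesis
  proof cases
    case 1 then show ?thesis using assms by (simp add: cot_angle_less_nonneg)
  next
    case 2
    have "cot_angle (- d) < cot_angle (- c)" using assms 2 by (intro cot_angle_less_nonneg) auto
    then show ?thesis by (simp add: cot_angle_minus)
  next
    case 3
    then show ?thesis
      using assms cot_angle_pos_iff[of c] cot_angle_pos_iff[of "-c"] cot_angle_pos_iff[of d]
      by (simp add: cot_angle_minus)
  qed
qed

lemma cot_angle_le_iff: "\<bar>c\<bar> < 1 \<Longrightarrow> \<bar>d\<bar> < 1 \<Longrightarrow> cot_angle c \<le> cot_angle d \<longleftrightarrow> c \<le> d"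
  using cot_angle_less[of c d] cot_angle_less[of d c] by (metis linorder_not_less order_le_less)

lemma cot_angle_step:
  fixes x y :: "'a::real_inner"
  assumes x: "norm x = 1" and y: "norm y = 1" and c: "\<bar>inner x y\<bar> < 1"
  shows "norm (step f y x) = 1" and "\<bar>inner (step f y x) y\<bar> < 1"
    and "cot_angle (inner (step f y x) y) =
           cot_angle (inner x y) + f (inner x y) / sqrt (1 - (inner x y)\<^sup>2)"
proof -
  define c where "c = inner x y"
  define g where "g = f c"
  define w where "w = x + g *\<^sub>R y"
  have "inner x x = 1" "inner y y = 1" using x y by (simp_all flip: power2_norm_eq_inner)
  \<comment> \<open>the new cosine \<open>(c + g) / \<parallel>w\<parallel>\<close> and sine \<open>\<surd>(1 - c\<^sup>2) / \<parallel>w\<parallel>\<close> share their denominator\<close>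
  then have N2: "(norm w)\<^sup>2 = (c + g)\<^sup>2 + (1 - c\<^sup>2)"
    unfolding power2_norm_eq_inner w_def c_def
    by (simp add: inner_add_left inner_add_right inner_commute power2_eq_square algebra_simps)
  have iw: "inner w y = c + g"
    using \<open>inner y y = 1\<close> unfolding w_def c_def by (simp add: inner_add_left)
  have c1: "0 < 1 - c\<^sup>2" using c unfolding c_def by (simp add: abs_square_less_1)
  then have "0 < (norm w)\<^sup>2" using N2 by (smt (verit) zero_le_power2)
  then have N: "0 < norm w" by simp
  have s: "step f y x = (1 / norm w) *\<^sub>R w" unfolding step_def w_def g_def c_def by (simp add: Let_def)
  show "norm (step f y x) = 1" using s N by simp
  have ic: "inner (step f y x) y = (c + g) / norm w" using s iw by simp
  have om: "1 - ((c + g) / norm w)\<^sup>2 = (1 - c\<^sup>2) / (norm w)\<^sup>2"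
    using N N2 by (simp add: field_simps)
  then have "((c + g) / norm w)\<^sup>2 < 1" using c1 N by (smt (verit) divide_pos_pos zero_less_power)
  then show "\<bar>inner (step f y x) y\<bar> < 1" unfolding ic by (simp add: abs_square_less_1)
  have "sqrt (1 - ((c + g) / norm w)\<^sup>2) = sqrt (1 - c\<^sup>2) / norm w"
    unfolding om using N by (simp add: real_sqrt_divide)
  then have "cot_angle ((c + g) / norm w) = (c + g) / sqrt (1 - c\<^sup>2)"
    unfolding cot_angle_def using N c1 by (simp add: field_simps)
  then show "cot_angle (inner (step f y x) y) =
      cot_angle (inner x y) + f (inner x y) / sqrt (1 - (inner x y)\<^sup>2)"
    unfolding ic c_def[symmetric] g_def[symmetric] cot_angle_def by (simp add: add_divide_distrib)
qed

locale active_update =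
  fixes f :: "real \<Rightarrow> real" and A0 m :: real
  assumes threshold: "-1 < A0" "A0 < 1"
    and nonpos_below: "\<And>A. -1 \<le> A \<Longrightarrow> A < A0 \<Longrightarrow> f A \<le> 0"
    and nonneg_above: "\<And>A. A \<le> 1 \<Longrightarrow> A0 < A \<Longrightarrow> 0 \<le> f A"
    and m_pos: "0 < m"
    and abs_ge_m: "\<And>A. -1 \<le> A \<Longrightarrow> A \<le> 1 \<Longrightarrow> m \<le> \<bar>f A\<bar>"

lemma active_imp_active_update:
  assumes "active f" obtains A0 m where "active_update f A0 m"
  using assms unfolding active_def active_update_def by fastforce

context active_update
begin

lemma ge_m_above: "A \<le> 1 \<Longrightarrow> A0 < A \<Longrightarrow> m \<le> f A"
  by (smt (verit) nonneg_above abs_ge_m threshold(1))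

lemma le_minus_m_below: "-1 \<le> A \<Longrightarrow> A < A0 \<Longrightarrow> f A \<le> - m"
  by (smt (verit) nonpos_below abs_ge_m threshold(2))

lemma sign_agrees_with_cot_angle:
  assumes "\<bar>c\<bar> < 1" shows "0 \<le> f c * (cot_angle c - cot_angle A0)"
proof -
  have A0: "\<bar>A0\<bar> < 1" using threshold by auto
  consider "c < A0" | "c = A0" | "A0 < c" by linarith
  then show ?thesis
  proof cases
    case 1
    then have "f c \<le> 0" "cot_angle c < cot_angle A0"
      using assms A0 by (auto intro: nonpos_below cot_angle_less)
    then show ?thesis by (simp add: mult_nonpos_nonpos)
  next
    case 3
    then have "0 \<le> f c" "cot_angle A0 < cot_angle c"
      using assms A0 by (auto intro: nonneg_above cot_angle_less)
    then show ?thesis by simp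
  qed simp
qed

lemma step_collinear:
  fixes y :: "'a::real_inner"
  assumes y: "norm y = 1" and x: "x = y \<or> x = - y"
  shows "step f y x = x"
proof -
  have yy: "inner y y = 1" using y by (simp flip: power2_norm_eq_inner)
  from x show ?thesis
  proof
    assume "x = y"
    moreover have "y + f 1 *\<^sub>R y = (1 + f 1) *\<^sub>R y" by (simp add: algebra_simps)
    moreover have "0 < 1 + f 1" using ge_m_above[of 1] threshold m_pos by simp
    ultimately show ?thesis using y yy by (simp add: step_def)
  next
    assume "x = - y"
    moreover have "- y + f (- 1) *\<^sub>R y = (1 - f (- 1)) *\<^sub>R (- y)" by (simp add: algebra_simps)
    moreover have "0 < 1 - f (- 1)" using le_minus_m_below[of "- 1"] threshold m_pos by simp
    ultimately show ?thesis using y yy by (simp add: step_def)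
  qed
qed

lemma norm_step:
  fixes x y :: "'a::real_inner"
  assumes "norm x = 1" "norm y = 1" shows "norm (step f y x) = 1"
proof (cases "\<bar>inner x y\<bar> < 1")
  case True then show ?thesis using cot_angle_step(1) assms by blast
next
  case False
  then have "x = y \<or> x = - y" using assms unit_inner_abs_le unit_inner_abs_eq_1 by fastforce
  then show ?thesis using step_collinear[OF assms(2)] assms(1) by metis
qed

lemma cot_angle_drift:
  fixes x y :: "'a::real_inner"
  assumes x: "norm x = 1" and y: "norm y = 1" and c: "\<bar>inner x y\<bar> < 1"
  shows "\<bar>cot_angle (inner x y) - cot_angle A0\<bar> + m
           \<le> \<bar>cot_angle (inner (step f y x) y) - cot_angle A0\<bar>"
proof -
  define c where "c = inner x y"
  define a where "a = cot_angle c - cot_angle A0"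
  define s where "s = sqrt (1 - c\<^sup>2)"
  have s: "0 < s" "s \<le> 1" using c by (auto simp: s_def c_def abs_square_less_1)
  have "m \<le> \<bar>f c\<bar>" using c by (intro abs_ge_m) (auto simp: c_def)
  also have "\<dots> \<le> \<bar>f c / s\<bar>" using s by (simp add: abs_div le_divide_eq mult_left_le)
  finally have b: "m \<le> \<bar>f c / s\<bar>" .
  have "0 \<le> a * (f c / s)"
    using sign_agrees_with_cot_angle[of c] c s unfolding a_def c_def by (simp add: mult.commute)
  then have "\<bar>a + f c / s\<bar> = \<bar>a\<bar> + \<bar>f c / s\<bar>" by (smt (verit) zero_le_mult_iff)
  moreover have "cot_angle (inner (step f y x) y) - cot_angle A0 = a + f c / s"
    using cot_angle_step(3)[OF x y c] by (simp add: a_def s_def c_def)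
  ultimately show ?thesis using b by (simp add: a_def c_def)
qed

lemma cot_angle_drift_iterate:
  fixes x y :: "'a::real_inner"
  assumes x: "norm x = 1" and y: "norm y = 1"
  shows "\<bar>inner ((step f y ^^ K) x) y\<bar> = 1 \<or> \<bar>inner ((step f y ^^ K) x) y\<bar> < 1 \<and>
           real K * m \<le> \<bar>cot_angle (inner ((step f y ^^ K) x) y) - cot_angle A0\<bar>"
proof (induction K)
  case 0
  then show ?case using unit_inner_abs_le[OF x y] by auto
next
  case (Suc K)
  define z where "z = (step f y ^^ K) x"
  have z: "norm z = 1" unfolding z_def by (induction K) (simp_all add: x y norm_step)
  from Suc consider "\<bar>inner z y\<bar> = 1"
    | "\<bar>inner z y\<bar> < 1" "real K * m \<le> \<bar>cot_angle (inner z y) - cot_angle A0\<bar>"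
    unfolding z_def by blast
  then show ?case
  proof cases
    case 1
    then have "step f y z = z" using z y by (simp add: step_collinear unit_inner_abs_eq_1)
    then show ?thesis using 1 by (simp add: z_def)
  next
    case 2
    then show ?thesis
      using cot_angle_drift[OF z y 2(1)] cot_angle_step(2)[OF z y 2(1)]
      by (simp add: z_def distrib_right)
  qed
qed

lemma iterated_step_aligns:
  assumes "\<delta> < 1"
  obtains K where "\<And>x y :: 'a::real_inner. norm x = 1 \<Longrightarrow> norm y = 1 \<Longrightarrow>
    \<delta> \<le> \<bar>inner ((step f y ^^ K) x) y\<bar>"
proof -
  define \<delta>' where "\<delta>' = max 0 \<delta>"
  have \<delta>': "\<delta> \<le> \<delta>'" "0 \<le> \<delta>'" "\<delta>' < 1" using assms by (auto simp: \<delta>'_def)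
  obtain K :: nat where K: "\<bar>cot_angle A0\<bar> + cot_angle \<delta>' \<le> real K * m"
    using reals_Archimedean3[OF m_pos] by (meson less_le_not_le linorder_le_less_linear)
  show thesis
  proof (rule that)
    fix x y :: 'a assume "norm x = 1" "norm y = 1"
    define c where "c = inner ((step f y ^^ K) x) y"
    from cot_angle_drift_iterate[OF \<open>norm x = 1\<close> \<open>norm y = 1\<close>, of K]
    consider "\<bar>c\<bar> = 1" | "\<bar>c\<bar> < 1" "real K * m \<le> \<bar>cot_angle c - cot_angle A0\<bar>"
      unfolding c_def by blast
    then show "\<delta> \<le> \<bar>c\<bar>"
    proof cases
      case 2
      then have "cot_angle \<delta>' \<le> cot_angle \<bar>c\<bar>" using K by (simp add: cot_angle_abs)
      then show ?thesis using \<delta>' 2(1) cot_angle_le_iff[of \<delta>' "\<bar>c\<bar>"] by simp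
    qed (use \<delta>' in simp)
  qed
qed

end

lemma inner_ge_via_common_direction:
  fixes u v e :: "'a::real_inner"
  assumes u: "norm u = 1" and v: "norm v = 1" and e: "norm e = 1"
    and ue: "\<delta> \<le> inner u e" and ve: "\<delta> \<le> inner v e"
  shows "4 * \<delta> - 3 \<le> inner u v"
proof -
  have "norm (u - v) \<le> norm (u - e) + norm (v - e)"
    using norm_triangle_ineq4[of "u - e" "v - e"] by simp
  then have "(norm (u - v))\<^sup>2 \<le> (norm (u - e) + norm (v - e))\<^sup>2" by (simp add: power_mono)
  also have "\<dots> \<le> 2 * (norm (u - e))\<^sup>2 + 2 * (norm (v - e))\<^sup>2"
    using zero_le_power2[of "norm (u - e) - norm (v - e)"] unfolding power2_diff power2_sum by linarith
  finally show ?thesis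
    using ue ve norm_diff_unit_sq[OF u v] norm_diff_unit_sq[OF u e] norm_diff_unit_sq[OF v e] by linarith
qed

lemma inner_normalized_combination_ge:
  fixes u v e :: "'a::real_inner"
  assumes u: "norm u = 1" and v: "norm v = 1" and e: "norm e = 1" and \<delta>: "0 < \<delta>"
    and ue: "\<delta> \<le> inner u e" and ve: "\<delta> \<le> inner v e" and g: "0 \<le> g"
  shows "\<delta> \<le> inner ((1 / norm (u + g *\<^sub>R v)) *\<^sub>R (u + g *\<^sub>R v)) e"
proof -
  define w where "w = u + g *\<^sub>R v"
  have "\<delta> * (1 + g) \<le> inner w e"
    using ue mult_left_mono[OF ve g] by (simp add: w_def inner_add_left algebra_simps)
  moreover have "inner w e \<le> norm w" using norm_cauchy_schwarz[of w e] e by simp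
  moreover have "norm w \<le> 1 + g" using norm_triangle_ineq[of u "g *\<^sub>R v"] u v g by (simp add: w_def)
  moreover have "0 < \<delta> * (1 + g)" using \<delta> g by simp
  ultimately have "\<delta> * norm w \<le> inner w e" "0 < norm w"
    by (smt (verit, best) \<delta> mult_left_mono)+
  then show ?thesis by (simp add: w_def[symmetric] le_divide_eq mult.commute)
qed

context active_update
begin

text \<open>Any two vectors of the cap \<open>{v. \<delta> \<le> v \<bullet> e}\<close> have inner product at least
  \<open>4 * \<delta> - 3 > \<bar>A0\<bar>\<close>, so after flipping signs an update is a normalised nonnegative
  combination of two vectors of the cap.\<close>
lemma update_preserves_signed_cap:
  fixes V :: "nat \<Rightarrow> 'a::real_inner"
  assumes e: "norm e = 1" and \<sigma>: "\<And>k. \<sigma> k = 1 \<or> \<sigma> k = -1" and \<delta>: "\<bar>A0\<bar> < 4 * \<delta> - 3"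
    and V: "\<And>k. k < n \<Longrightarrow> norm (V k) = 1"
    and cap: "\<And>k. k < n \<Longrightarrow> \<delta> \<le> inner (\<sigma> k *\<^sub>R V k) e"
    and ij: "i < n" "j < n" and k: "k < n"
  shows "\<delta> \<le> inner (\<sigma> k *\<^sub>R update f V (i, j) k) e"
proof (cases "k = i")
  case False
  then show ?thesis using cap k by (simp add: update_eq_step)
next
  case True
  define u where "u = \<sigma> i *\<^sub>R V i"
  define v where "v = \<sigma> j *\<^sub>R V j"
  define A where "A = inner (V i) (V j)"
  define g where "g = \<sigma> i * \<sigma> j * f A"
  have \<sigma>\<sigma>: "\<sigma> i * \<sigma> i = 1" "\<sigma> j * \<sigma> j = 1" "\<sigma> i * \<sigma> j = 1 \<or> \<sigma> i * \<sigma> j = -1"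
    using \<sigma>[of i] \<sigma>[of j] by auto
  have uv: "norm u = 1" "norm v = 1" using V ij \<sigma>[of i] \<sigma>[of j] by (auto simp: u_def v_def)
  have "4 * \<delta> - 3 \<le> inner u v"
    using inner_ge_via_common_direction[OF uv e] cap ij by (simp add: u_def v_def)
  moreover have "A = \<sigma> i * \<sigma> j * inner u v"
    using \<sigma>\<sigma> by (simp add: A_def u_def v_def algebra_simps)
  moreover have "\<bar>A\<bar> \<le> 1" unfolding A_def using V ij by (intro unit_inner_abs_le) auto
  ultimately have "0 \<le> g"
    using \<sigma>\<sigma>(3) \<delta> nonneg_above[of A] nonpos_below[of A] by (auto simp: g_def)
  define w where "w = V i + f A *\<^sub>R V j"
  have "\<sigma> i *\<^sub>R w = u + g *\<^sub>R v"
    using \<sigma>\<sigma> by (simp add: w_def u_def v_def g_def algebra_simps)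
  moreover have "norm (\<sigma> i *\<^sub>R w) = norm w" using \<sigma>[of i] by auto
  moreover have "update f V (i, j) i = (1 / norm w) *\<^sub>R w"
    by (simp add: update_eq_step step_def Let_def w_def A_def)
  ultimately have "\<sigma> i *\<^sub>R update f V (i, j) i = (1 / norm (u + g *\<^sub>R v)) *\<^sub>R (u + g *\<^sub>R v)"
    by (metis scaleR_scaleR mult.commute)
  then show ?thesis
    using True inner_normalized_combination_ge[OF uv e _ _ _ \<open>0 \<le> g\<close>] cap ij \<delta>
    by (simp add: u_def v_def)
qed

lemma norm_traj:
  assumes I: "\<forall>t. I t \<in> interactions n" and U0: "\<forall>i<n. norm (U0 i) = 1"
  shows "k < n \<Longrightarrow> norm (traj f U0 I t k) = (1::real)"
proof (induction t arbitrary: k)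
  case (Suc t)
  obtain i j where ij: "I t = (i, j)" "i < n" "j < n"
    using I[rule_format, of t] by (cases "I t") (auto simp: interactions_def)
  then show ?case using Suc.IH Suc.prems by (simp add: update_eq_step norm_step)
qed (use U0 in simp)

lemma traj_stays_in_signed_cap:
  fixes U0 :: "nat \<Rightarrow> 'a::real_inner"
  assumes I: "\<forall>t. I t \<in> interactions n" and U0: "\<forall>i<n. norm (U0 i) = 1"
    and e: "norm e = 1" and \<sigma>: "\<forall>k. \<sigma> k = 1 \<or> \<sigma> k = -1" and \<delta>: "\<bar>A0\<bar> < 4 * \<delta> - 3"
    and cap: "\<forall>k<n. \<delta> \<le> inner (\<sigma> k *\<^sub>R traj f U0 I s k) e"
  shows "s \<le> t \<Longrightarrow> k < n \<Longrightarrow> \<delta> \<le> inner (\<sigma> k *\<^sub>R traj f U0 I t k) e"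
proof (induction t arbitrary: k rule: dec_induct)
  case (step t)
  obtain i j where ij: "I t = (i, j)" "i < n" "j < n"
    using I[rule_format, of t] by (cases "I t") (auto simp: interactions_def)
  then show ?case
    using update_preserves_signed_cap[OF e \<sigma>[rule_format] \<delta> norm_traj[OF I U0] step.IH] step.prems
    by simp
qed (use cap in simp)

end

definition occurs_at :: "'b list \<Rightarrow> nat \<Rightarrow> (nat \<Rightarrow> 'b) \<Rightarrow> bool" where
  "occurs_at W s \<omega> \<longleftrightarrow> (\<forall>l < length W. \<omega> (s + l) = W ! l)"

lemma traj_after_occurrence:
  "occurs_at W s I \<Longrightarrow> traj f U0 I (s + length W) = fold (\<lambda>p V. update f V p) W (traj f U0 I s)"
proof (induction W arbitrary: s)
  case (Cons p W)
  then have "I s = p" "occurs_at W (Suc s) I"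
    by (auto simp: occurs_at_def dest: spec[of _ 0] spec[of _ "Suc _"])
  then show ?case using Cons.IH[of "Suc s"] by simp
qed simp

definition align_word :: "nat \<Rightarrow> nat \<Rightarrow> (nat \<times> nat) list" where
  "align_word n K = concat (map (\<lambda>i. replicate K (i, 0)) [1..<n])"

lemma set_align_word: "set (align_word n K) \<subseteq> interactions n"
  by (auto simp: align_word_def interactions_def)

lemma fold_align_word:
  "fold (\<lambda>p V. update f V p) (align_word n K) U =
     (\<lambda>k. if k \<in> {1..<n} then (step f (U 0) ^^ K) (U k) else U k)"
proof -
  have repeat: "((\<lambda>V. update f V (i, 0)) ^^ K) U = U(i := (step f (U 0) ^^ K) (U i))"
    if "i \<noteq> 0" for i and U :: "nat \<Rightarrow> 'a"
    using that by (induction K arbitrary: U)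
      (simp_all add: update_eq_step funpow_Suc_right del: funpow.simps)
  have "fold (\<lambda>p V. update f V p) (concat (map (\<lambda>i. replicate K (i, 0)) xs)) U =
      (\<lambda>k. if k \<in> set xs then (step f (U 0) ^^ K) (U k) else U k)"
    if "distinct xs" "0 \<notin> set xs" for xs and U :: "nat \<Rightarrow> 'a"
    using that by (induction xs arbitrary: U) (auto simp: repeat fun_eq_iff)
  then show ?thesis unfolding align_word_def by simp
qed

definition eventually_near_polarized :: "nat \<Rightarrow> (nat \<Rightarrow> nat \<Rightarrow> 'a::real_normed_vector) \<Rightarrow> bool" where
  "eventually_near_polarized n X \<longleftrightarrow>
     (\<forall>r>0. \<exists>N e \<sigma>. (\<forall>k. \<sigma> k = 1 \<or> \<sigma> k = (-1::real)) \<and> (\<forall>t\<ge>N. \<forall>k<n. norm (\<sigma> k *\<^sub>R X t k - e) \<le> r))"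

lemma eventually_near_polarized_Cauchy:
  assumes "eventually_near_polarized n X" "i < n" shows "Cauchy (\<lambda>t. X t i)"
proof (rule metric_CauchyI)
  fix \<epsilon> :: real assume "0 < \<epsilon>"
  then obtain N e \<sigma> where \<sigma>: "\<forall>k. \<sigma> k = 1 \<or> \<sigma> k = (-1::real)"
    and near: "\<forall>t\<ge>N. \<forall>k<n. norm (\<sigma> k *\<^sub>R X t k - e) \<le> \<epsilon> / 3"
    using assms(1)[unfolded eventually_near_polarized_def, rule_format, of "\<epsilon> / 3"] \<open>0 < \<epsilon>\<close> by auto
  have "dist (X a i) (X b i) < \<epsilon>" if "N \<le> a" "N \<le> b" for a b
  proof -
    have "dist (X a i) (X b i) = norm (\<sigma> i *\<^sub>R (X a i - X b i))"
      using \<sigma>[rule_format, of i] by (auto simp: dist_norm)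
    also have "\<dots> = norm ((\<sigma> i *\<^sub>R X a i - e) - (\<sigma> i *\<^sub>R X b i - e))"
      by (simp add: algebra_simps)
    also have "\<dots> \<le> norm (\<sigma> i *\<^sub>R X a i - e) + norm (\<sigma> i *\<^sub>R X b i - e)"
      by (rule norm_triangle_ineq4)
    also have "\<dots> \<le> \<epsilon> / 3 + \<epsilon> / 3" using near that assms(2) by (intro add_mono) auto
    finally show ?thesis using \<open>0 < \<epsilon>\<close> by linarith
  qed
  then show "\<exists>M. \<forall>a\<ge>M. \<forall>b\<ge>M. dist (X a i) (X b i) < \<epsilon>" by blast
qed

lemma eventually_near_polarized_limits:
  assumes near: "eventually_near_polarized n X"
    and lim: "\<And>i. i < n \<Longrightarrow> (\<lambda>t. X t i) \<longlonglongrightarrow> L i"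
  shows "polarized n L"
  unfolding polarized_def
proof (intro allI impI)
  fix i j assume ij: "i < n" "j < n"
  have dist: "min (norm (L i - L j)) (norm (L i + L j)) \<le> 2 * r" if "0 < r" for r
  proof -
    obtain N e \<sigma> where \<sigma>: "\<forall>k. \<sigma> k = 1 \<or> \<sigma> k = (-1::real)"
      and close: "\<forall>t\<ge>N. \<forall>k<n. norm (\<sigma> k *\<^sub>R X t k - e) \<le> r"
      using near[unfolded eventually_near_polarized_def, rule_format, OF \<open>0 < r\<close>] by blast
    have bound: "norm (\<sigma> k *\<^sub>R L k - e) \<le> r" if "k < n" for k
    proof (rule Lim_bounded)
      show "(\<lambda>t. norm (\<sigma> k *\<^sub>R X t k - e)) \<longlonglongrightarrow> norm (\<sigma> k *\<^sub>R L k - e)"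
        using that by (intro tendsto_intros lim)
      show "\<forall>t\<ge>N. norm (\<sigma> k *\<^sub>R X t k - e) \<le> r" using close that by blast
    qed
    have "norm (\<sigma> i *\<^sub>R L i - \<sigma> j *\<^sub>R L j) \<le> 2 * r"
      using norm_triangle_ineq4[of "\<sigma> i *\<^sub>R L i - e" "\<sigma> j *\<^sub>R L j - e"] bound[OF ij(1)] bound[OF ij(2)]
      by simp
    moreover have "norm (\<sigma> i *\<^sub>R L i - \<sigma> j *\<^sub>R L j) \<in> {norm (L i - L j), norm (L i + L j)}"
      using \<sigma>[rule_format, of i] \<sigma>[rule_format, of j] norm_minus_cancel[of "L i + L j"]
      by (auto simp: norm_minus_commute)
    ultimately show ?thesis by auto
  qed
  have "min (norm (L i - L j)) (norm (L i + L j)) \<le> 0"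
    by (rule field_le_epsilon) (use dist[of "_ / 2"] in simp)
  then show "L i = L j \<or> L i = - L j"
    by (metis min_def norm_le_zero_iff eq_iff_diff_eq_0 eq_neg_iff_add_eq_0)
qed

lemma eventually_near_polarized_imp_polarizes:
  fixes X :: "nat \<Rightarrow> nat \<Rightarrow> 'a::banach"
  assumes "eventually_near_polarized n X" shows "polarizes n X"
proof -
  define L where "L i = lim (\<lambda>t. X t i)" for i
  have "(\<lambda>t. X t i) \<longlonglongrightarrow> L i" if "i < n" for i
    using eventually_near_polarized_Cauchy[OF assms that]
    by (simp add: L_def Cauchy_convergent_iff convergent_LIMSEQ_iff)
  then show ?thesis
    using eventually_near_polarized_limits[OF assms] unfolding polarizes_def by blast
qed

context active_update
begin

lemma eventually_in_signed_cap:
  fixes U0 :: "nat \<Rightarrow> 'a::real_inner"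
  assumes n: "0 < n" and I: "\<forall>t. I t \<in> interactions n" and U0: "\<forall>i<n. norm (U0 i) = 1"
    and occurs: "\<forall>K. \<exists>s. occurs_at (align_word n K) s I"
    and \<delta>: "\<bar>A0\<bar> < 4 * \<delta> - 3" "\<delta> < 1"
  obtains e \<sigma> N where "norm e = 1" "\<And>k. \<sigma> k = 1 \<or> \<sigma> k = -1"
    "\<And>t k. N \<le> t \<Longrightarrow> k < n \<Longrightarrow> \<delta> \<le> inner (\<sigma> k *\<^sub>R traj f U0 I t k) e"
proof -
  obtain K where K: "\<And>x y :: 'a. norm x = 1 \<Longrightarrow> norm y = 1 \<Longrightarrow> \<delta> \<le> \<bar>inner ((step f y ^^ K) x) y\<bar>"
    using iterated_step_aligns[OF \<delta>(2)] by blast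
  obtain s where s: "occurs_at (align_word n K) s I" using occurs by blast
  define N where "N = s + length (align_word n K)"
  define e where "e = traj f U0 I s 0"
  define \<sigma> :: "nat \<Rightarrow> real" where "\<sigma> k = (if 0 \<le> inner (traj f U0 I N k) e then 1 else -1)" for k
  have e: "norm e = 1" using norm_traj[OF I U0 n] by (simp add: e_def)
  have \<sigma>: "\<forall>k. \<sigma> k = 1 \<or> \<sigma> k = -1" by (simp add: \<sigma>_def)
  have "\<delta> \<le> \<bar>inner (traj f U0 I N k) e\<bar>" if "k < n" for k
  proof (cases "k = 0")
    case True
    then show ?thesis using e \<delta>(2)
      by (simp add: N_def e_def traj_after_occurrence[OF s] fold_align_word flip: power2_norm_eq_inner)
  next
    case False
    then show ?thesis using K[OF norm_traj[OF I U0 that] e] that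
      by (simp add: N_def e_def traj_after_occurrence[OF s] fold_align_word)
  qed
  then have "\<forall>k<n. \<delta> \<le> inner (\<sigma> k *\<^sub>R traj f U0 I N k) e"
    by (fastforce simp: \<sigma>_def abs_if)
  from traj_stays_in_signed_cap[OF I U0 e \<sigma> \<delta>(1) this] show thesis by (rule that[OF e \<sigma>[rule_format]])
qed

lemma polarizes_if_align_words_occur:
  fixes U0 :: "nat \<Rightarrow> 'a::{real_inner, banach}"
  assumes n: "0 < n" and I: "\<forall>t. I t \<in> interactions n" and U0: "\<forall>i<n. norm (U0 i) = 1"
    and occurs: "\<forall>K. \<exists>s. occurs_at (align_word n K) s I"
  shows "polarizes n (traj f U0 I)"
proof (rule eventually_near_polarized_imp_polarizes,
    unfold eventually_near_polarized_def, intro allI impI)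
  fix r :: real assume "0 < r"
  define \<delta> where "\<delta> = 1 - min (r\<^sup>2 / 2) ((1 - \<bar>A0\<bar>) / 8)"
  have "\<bar>A0\<bar> < 1" using threshold by auto
  then have "0 < min (r\<^sup>2 / 2) ((1 - \<bar>A0\<bar>) / 8)" using \<open>0 < r\<close> by simp
  then have \<delta>: "\<bar>A0\<bar> < 4 * \<delta> - 3" "\<delta> < 1" "2 - 2 * \<delta> \<le> r\<^sup>2"
    using \<delta>_def \<open>\<bar>A0\<bar> < 1\<close> min.cobounded1[of "r\<^sup>2 / 2" "(1 - \<bar>A0\<bar>) / 8"]
      min.cobounded2[of "r\<^sup>2 / 2" "(1 - \<bar>A0\<bar>) / 8"] by auto
  obtain e \<sigma> N where e: "norm e = 1" and \<sigma>: "\<And>k. \<sigma> k = 1 \<or> \<sigma> k = -1"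
    and cap: "\<And>t k. N \<le> t \<Longrightarrow> k < n \<Longrightarrow> \<delta> \<le> inner (\<sigma> k *\<^sub>R traj f U0 I t k) e"
    using eventually_in_signed_cap[OF n I U0 occurs \<delta>(1,2)] by blast
  have "norm (\<sigma> k *\<^sub>R traj f U0 I t k - e) \<le> r" if "N \<le> t" "k < n" for t k
  proof -
    have "norm (\<sigma> k *\<^sub>R traj f U0 I t k) = 1" using norm_traj[OF I U0 \<open>k < n\<close>] \<sigma>[of k] by auto
    then have "(norm (\<sigma> k *\<^sub>R traj f U0 I t k - e))\<^sup>2 \<le> r\<^sup>2"
      using norm_diff_unit_sq[OF _ e] cap[OF that] \<delta>(3) by simp
    then show ?thesis by (rule power2_le_imp_le) (use \<open>0 < r\<close> in simp)
  qed
  with \<sigma> show "\<exists>N e \<sigma>. (\<forall>k. \<sigma> k = 1 \<or> \<sigma> k = -1) \<and> (\<forall>t\<ge>N. \<forall>k<n. norm (\<sigma> k *\<^sub>R traj f U0 I t k - e) \<le> r)"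
    by blast
qed

end

lemma (in sequence_space) measure_prefix_and_shift:
  assumes A: "A \<in> sets S" and B: "B \<in> sets S"
    and prefix: "\<And>\<omega> \<omega>'. (\<And>i. i < L \<Longrightarrow> \<omega> i = \<omega>' i) \<Longrightarrow> \<omega> \<in> A \<longleftrightarrow> \<omega>' \<in> A"
  shows "measure S {\<omega> \<in> A. (\<lambda>i. \<omega> (i + L)) \<in> B} = measure S A * measure S B"
proof -
  let ?g = "\<lambda>(\<omega>, \<omega>'). comb_seq L \<omega> \<omega>'"
  have shift: "(\<lambda>\<omega> i. \<omega> (i + L)) \<in> measurable S S"
    by (intro measurable_PiM_single') (auto simp: space_PiM PiE_iff)
  have "{\<omega> \<in> A. (\<lambda>i. \<omega> (i + L)) \<in> B} = A \<inter> ((\<lambda>\<omega> i. \<omega> (i + L)) -` B \<inter> space S)"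
    using sets.sets_into_space[OF A] by auto
  then have sets: "{\<omega> \<in> A. (\<lambda>i. \<omega> (i + L)) \<in> B} \<in> sets S"
    using A B measurable_sets[OF shift B] by auto
  have "comb_seq L \<omega> \<omega>' \<in> A \<longleftrightarrow> \<omega> \<in> A" for \<omega> \<omega>'
    by (rule prefix) (simp add: comb_seq_less)
  then have preimage: "?g -` {\<omega> \<in> A. (\<lambda>i. \<omega> (i + L)) \<in> B} \<inter> space (S \<Otimes>\<^sub>M S) = A \<times> B"
    using sets.sets_into_space[OF A] sets.sets_into_space[OF B]
    by (auto simp: space_pair_measure comb_seq_add)
  have "emeasure S {\<omega> \<in> A. (\<lambda>i. \<omega> (i + L)) \<in> B} =
      emeasure (distr (S \<Otimes>\<^sub>M S) S ?g) {\<omega> \<in> A. (\<lambda>i. \<omega> (i + L)) \<in> B}"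
    by (simp only: PiM_comb_seq)
  also have "\<dots> = emeasure (S \<Otimes>\<^sub>M S) (A \<times> B)"
    by (simp only: emeasure_distr[OF measurable_comb_seq sets] preimage)
  also have "\<dots> = emeasure S A * emeasure S B"
    using A B by (rule P.emeasure_pair_measure_Times)
  finally show ?thesis by (simp add: measure_def enn2real_mult)
qed

lemma measurable_occurs_at [measurable]:
  "Measurable.pred (PiM UNIV (\<lambda>_::nat. measure_pmf D)) (occurs_at W t)"
  unfolding occurs_at_def by measurable

lemma sets_occurs_at: "{\<omega>. occurs_at W t \<omega>} \<in> sets (PiM UNIV (\<lambda>_::nat. measure_pmf D))"
proof -
  have "{\<omega> \<in> space (PiM UNIV (\<lambda>_::nat. measure_pmf D)). occurs_at W t \<omega>}
      \<in> sets (PiM UNIV (\<lambda>_. measure_pmf D))"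
    by measurable
  then show ?thesis by (simp add: space_PiM)
qed

lemma sets_avoids_blocks:
  "{\<omega>. \<forall>k<N. \<not> occurs_at W (k * length W) \<omega>} \<in> sets (PiM UNIV (\<lambda>_::nat. measure_pmf D))"
proof -
  have "{\<omega> \<in> space (PiM UNIV (\<lambda>_::nat. measure_pmf D)). \<forall>k<N. \<not> occurs_at W (k * length W) \<omega>}
      \<in> sets (PiM UNIV (\<lambda>_. measure_pmf D))"
    by measurable
  then show ?thesis by (simp add: space_PiM)
qed

lemma measure_occurs_at:
  "measure (PiM UNIV (\<lambda>_::nat. measure_pmf D)) {\<omega>. occurs_at W 0 \<omega>} = (\<Prod>i<length W. pmf D (W ! i))"
proof -
  interpret sequence_space "measure_pmf D" by unfold_locales
  have "{\<omega>. occurs_at W 0 \<omega>} = {\<omega> \<in> space S. \<forall>i\<in>{..<length W}. \<omega> i \<in> {W ! i}}"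
    by (auto simp: occurs_at_def space_PiM)
  then have "emeasure S {\<omega>. occurs_at W 0 \<omega>} = (\<Prod>i<length W. emeasure (measure_pmf D) {W ! i})"
    by (simp only: emeasure_PiM_Collect finite_lessThan subset_UNIV sets_measure_pmf UNIV_I)
  then show ?thesis by (simp add: measure_def emeasure_pmf_single prod_ennreal prod_nonneg)
qed

lemma measure_avoids_blocks:
  "measure (PiM UNIV (\<lambda>_::nat. measure_pmf D)) {\<omega>. \<forall>k<N. \<not> occurs_at W (k * length W) \<omega>} =
     (1 - (\<Prod>i<length W. pmf D (W ! i))) ^ N"
proof -
  interpret sequence_space "measure_pmf D" by unfold_locales
  have space: "space S = UNIV" by (simp add: space_PiM)
  show ?thesis
  proof (induction N)
    case 0
    then show ?case using P.prob_space by (simp add: space)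
  next
    case (Suc N)
    have "occurs_at W (Suc k * length W) \<omega> \<longleftrightarrow> occurs_at W (k * length W) (\<lambda>i. \<omega> (i + length W))"
      for k \<omega> by (simp add: occurs_at_def ac_simps)
    then have "{\<omega>. \<forall>k<Suc N. \<not> occurs_at W (k * length W) \<omega>} =
        {\<omega> \<in> UNIV - {\<omega>. occurs_at W 0 \<omega>}.
           (\<lambda>i. \<omega> (i + length W)) \<in> {\<omega>. \<forall>k<N. \<not> occurs_at W (k * length W) \<omega>}}"
      by (auto simp: less_Suc_eq_0_disj)
    also have "measure S \<dots> = measure S (UNIV - {\<omega>. occurs_at W 0 \<omega>}) *
        measure S {\<omega>. \<forall>k<N. \<not> occurs_at W (k * length W) \<omega>}"
    proof (rule measure_prefix_and_shift[OF _ sets_avoids_blocks])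
      show "UNIV - {\<omega>. occurs_at W 0 \<omega>} \<in> sets S"
        using sets.compl_sets[OF sets_occurs_at[of W 0 D]] by (simp add: space)
    qed (simp add: occurs_at_def)
    also have "measure S (UNIV - {\<omega>. occurs_at W 0 \<omega>}) = 1 - (\<Prod>i<length W. pmf D (W ! i))"
      using P.prob_compl[OF sets_occurs_at] by (simp add: space measure_occurs_at)
    finally show ?case using Suc.IH by simp
  qed
qed

text \<open>Disjoint blocks of length \<open>length W\<close> are independent and each matches \<open>W\<close> with the same
  positive probability.\<close>
lemma AE_occurs:
  fixes D :: "'b pmf"
  assumes W: "set W \<subseteq> set_pmf D"
  shows "AE \<omega> in PiM UNIV (\<lambda>_::nat. measure_pmf D). \<exists>s. occurs_at W s \<omega>"
proof -
  interpret sequence_space "measure_pmf D" by unfold_locales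
  define q where "q = (\<Prod>i<length W. pmf D (W ! i))"
  define never where "never = (\<Inter>N. {\<omega>. \<forall>k<N. \<not> occurs_at W (k * length W) \<omega>})"
  have never_sets: "never \<in> sets S"
    unfolding never_def by (intro sets.countable_INT) (auto simp: sets_avoids_blocks)
  have "0 < q" "q \<le> 1"
    using W measure_occurs_at[of D W] P.prob_le_1[of "{\<omega>. occurs_at W 0 \<omega>}"]
    by (auto simp: q_def intro!: prod_pos pmf_positive)
  then have "(\<lambda>N. (1 - q) ^ N) \<longlonglongrightarrow> 0" by (intro LIMSEQ_power_zero) auto
  moreover have "measure S never \<le> (1 - q) ^ N" for N
    unfolding q_def measure_avoids_blocks[symmetric] never_def
    by (intro P.finite_measure_mono) (auto simp: sets_avoids_blocks)
  ultimately have "measure S never \<le> 0" by (intro Lim_bounded2) auto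
  then have "never \<in> null_sets S"
    using never_sets by (simp add: P.emeasure_eq_measure null_sets_def measure_le_0_iff)
  moreover have "{\<omega> \<in> space S. \<not> (\<exists>s. occurs_at W s \<omega>)} \<subseteq> never"
    by (auto simp: never_def)
  ultimately show ?thesis by (rule AE_I')
qed

theorem mainTheorem2:
  fixes f :: "real \<Rightarrow> real" and n :: nat and D :: "(nat \<times> nat) pmf"
    and U0 :: "nat \<Rightarrow> 'a::euclidean_space"
  assumes "DIM('a) \<ge> 2" and "n \<ge> 2"
    and "active f"
    and "set_pmf D = interactions n"
    and "\<forall>i<n. norm (U0 i) = 1"
  shows "AE I in PiM UNIV (\<lambda>_::nat. measure_pmf D). polarizes n (traj f U0 I)"
proof -
  obtain A0 m where "active_update f A0 m" using active_imp_active_update[OF assms(3)] .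
  then interpret active_update f A0 m .
  have "AE I in PiM UNIV (\<lambda>_::nat. measure_pmf D). \<forall>t. I t \<in> interactions n"
    unfolding AE_all_countable
    using AE_measure_pmf[of D] assms(4) by (auto intro!: AE_PiM_component prob_space_measure_pmf)
  moreover have "AE I in PiM UNIV (\<lambda>_::nat. measure_pmf D). \<forall>K. \<exists>s. occurs_at (align_word n K) s I"
    unfolding AE_all_countable using set_align_word assms(4) by (auto intro!: AE_occurs)
  ultimately show ?thesis
  proof eventually_elim
    case (elim I)
    then show ?case using polarizes_if_align_words_occur[of n I U0] assms(2,5) by auto
  qed
qed

end
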